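(* Let $f:M\to\mathbb{R}^{0,2,1}$ be a non-degenerate $d$-minimal surface. Then $\iota\circ f:M\to\mathbb{R}^4_1$ is a spacelike, flat, zero mean curvature surface in $\mathbb{R}^4_1$.
   Context: $\mathbb{R}^{0,2,1}$ denotes $\mathbb{R}^3$ with coordinates $(x,y,z)$ and the degenerate form $(\cdot,\cdot)=dx^2+dy^2$. A non-degenerate immersion has positive definite induced metric $g=f^*(\cdot,\cdot)$. With $\xi=(0,0,1)$ and $d$ the standard flat connection of $\mathbb{R}^3$, writing $d_X(df(Y))=df(\nabla_XY)+h(X,Y)\xi$ ($\nabla$ the Levi-Civita connection of $g$) defines the second fundamental form $h$, and $f$ is $d$-minimal if $\mathrm{tr}_gh\equiv0$. $\mathbb{R}^4_1$ is $\mathbb{R}^4$ with metric $-dx_1^2+dx_2^2+dx_3^2+dx_4^2$, and $\iota(x,y,z)=(z,x,y,z)$. A surface in $\mathbb{R}^4_1$ is spacelike if its induced metric is positive definite, flat if its Gaussian curvature vanishes, and zero mean curvature if its mean curvature vector field vanishes. *)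

theory Defs
  imports "HOL-Analysis.Analysis"
begin

text \<open>Surfaces are treated via a local parametrisation: M is an open set U of the
  (u0,u1)-plane, coordinate directions are indexed by 0 and 1.\<close>

definition pd :: "nat \<Rightarrow> (real \<times> real \<Rightarrow> 'a::real_normed_vector) \<Rightarrow> real \<times> real \<Rightarrow> 'a" where
  "pd i F p = (if i = 0 then vector_derivative (\<lambda>t. F (t, snd p)) (at (fst p))
               else vector_derivative (\<lambda>t. F (fst p, t)) (at (snd p)))"

definition pd_exists :: "nat \<Rightarrow> (real \<times> real \<Rightarrow> 'a::real_normed_vector) \<Rightarrow> real \<times> real \<Rightarrow> bool" where
  "pd_exists i F p = (if i = 0 then (\<lambda>t. F (t, snd p)) differentiable (at (fst p))
                      else (\<lambda>t. F (fst p, t)) differentiable (at (snd p)))"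

fun ipd :: "nat list \<Rightarrow> (real \<times> real \<Rightarrow> 'a::real_normed_vector) \<Rightarrow> real \<times> real \<Rightarrow> 'a" where
  "ipd [] F = F"
| "ipd (i # is) F = pd i (ipd is F)"

definition smooth_on :: "(real \<times> real) set \<Rightarrow> (real \<times> real \<Rightarrow> 'a::real_normed_vector) \<Rightarrow> bool" where
  "smooth_on U F = (\<forall>is. continuous_on U (ipd is F) \<and>
                       (\<forall>i<2. \<forall>p\<in>U. pd_exists i (ipd is F) p))"

definition ind_metric :: "('a \<Rightarrow> 'a \<Rightarrow> real) \<Rightarrow> (real \<times> real \<Rightarrow> 'a::real_normed_vector)
    \<Rightarrow> real \<times> real \<Rightarrow> nat \<Rightarrow> nat \<Rightarrow> real" where
  "ind_metric B F p i j = B (pd i F p) (pd j F p)"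

definition pos_def_at :: "(real \<times> real \<Rightarrow> nat \<Rightarrow> nat \<Rightarrow> real) \<Rightarrow> real \<times> real \<Rightarrow> bool" where
  "pos_def_at g p = (\<forall>c :: nat \<Rightarrow> real. (c 0, c 1) \<noteq> (0, 0) \<longrightarrow>
                        (\<Sum>i<2. \<Sum>j<2. c i * c j * g p i j) > 0)"

definition det_metric :: "(real \<times> real \<Rightarrow> nat \<Rightarrow> nat \<Rightarrow> real) \<Rightarrow> real \<times> real \<Rightarrow> real" where
  "det_metric g p = g p 0 0 * g p 1 1 - g p 0 1 * g p 1 0"

definition inv_metric :: "(real \<times> real \<Rightarrow> nat \<Rightarrow> nat \<Rightarrow> real) \<Rightarrow> real \<times> real \<Rightarrow> nat \<Rightarrow> nat \<Rightarrow> real" where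
  "inv_metric g p i j =
     (if i = 0 \<and> j = 0 then g p 1 1
      else if i = 1 \<and> j = 1 then g p 0 0
      else - g p i j) / det_metric g p"

definition christoffel :: "(real \<times> real \<Rightarrow> nat \<Rightarrow> nat \<Rightarrow> real) \<Rightarrow> real \<times> real \<Rightarrow> nat \<Rightarrow> nat \<Rightarrow> nat \<Rightarrow> real" where
  "christoffel g p k i j = (1/2) * (\<Sum>l<2. inv_metric g p k l *
      (pd i (\<lambda>q. g q j l) p + pd j (\<lambda>q. g q i l) p - pd l (\<lambda>q. g q i j) p))"

text \<open>Components R^l_{ijk} of the curvature tensor, R(X,Y)Z = nabla_X nabla_Y Z - nabla_Y nabla_X Z - nabla_[X,Y] Z.\<close>
definition riemann :: "(real \<times> real \<Rightarrow> nat \<Rightarrow> nat \<Rightarrow> real) \<Rightarrow> real \<times> real \<Rightarrow> nat \<Rightarrow> nat \<Rightarrow> nat \<Rightarrow> nat \<Rightarrow> real" where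
  "riemann g p l i j k =
     pd i (\<lambda>q. christoffel g q l j k) p - pd j (\<lambda>q. christoffel g q l i k) p
     + (\<Sum>m<2. christoffel g p m j k * christoffel g p l i m
              - christoffel g p m i k * christoffel g p l j m)"

definition gauss_curv :: "(real \<times> real \<Rightarrow> nat \<Rightarrow> nat \<Rightarrow> real) \<Rightarrow> real \<times> real \<Rightarrow> real" where
  "gauss_curv g p = (\<Sum>l<2. riemann g p l 0 1 1 * g p l 0) / det_metric g p"

definition deg_form :: "real \<times> real \<times> real \<Rightarrow> real \<times> real \<times> real \<Rightarrow> real" where
  "deg_form u v = fst u * fst v + fst (snd u) * fst (snd v)"

definition xi :: "real \<times> real \<times> real" where "xi = (0, 0, 1)"

text \<open>Second fundamental form h of f in R^{0,2,1}: d_{d_i}(df(d_j)) = df(nabla_{d_i} d_j) + h_{ij} xi,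
  so h_{ij} is the xi-coefficient (z-component) of f_{ij} - Gamma^k_{ij} f_k.\<close>
definition sff_d :: "(real \<times> real \<Rightarrow> real \<times> real \<times> real) \<Rightarrow> real \<times> real \<Rightarrow> nat \<Rightarrow> nat \<Rightarrow> real" where
  "sff_d f p i j = snd (snd (pd i (pd j f) p
       - (\<Sum>k<2. christoffel (ind_metric deg_form f) p k i j *\<^sub>R pd k f p)))"

definition nondegenerate :: "(real \<times> real) set \<Rightarrow> (real \<times> real \<Rightarrow> real \<times> real \<times> real) \<Rightarrow> bool" where
  "nondegenerate U f = (\<forall>p\<in>U. pos_def_at (ind_metric deg_form f) p)"

definition d_minimal :: "(real \<times> real) set \<Rightarrow> (real \<times> real \<Rightarrow> real \<times> real \<times> real) \<Rightarrow> bool" where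
  "d_minimal U f = (\<forall>p\<in>U. (\<Sum>i<2. \<Sum>j<2. inv_metric (ind_metric deg_form f) p i j * sff_d f p i j) = 0)"

definition mink :: "real \<times> real \<times> real \<times> real \<Rightarrow> real \<times> real \<times> real \<times> real \<Rightarrow> real" where
  "mink u v = - fst u * fst v + fst (snd u) * fst (snd v)
              + fst (snd (snd u)) * fst (snd (snd v)) + snd (snd (snd u)) * snd (snd (snd v))"

definition iota :: "real \<times> real \<times> real \<Rightarrow> real \<times> real \<times> real \<times> real" where
  "iota u = (case u of (x, y, z) \<Rightarrow> (z, x, y, z))"

definition spacelike :: "(real \<times> real) set \<Rightarrow> (real \<times> real \<Rightarrow> real \<times> real \<times> real \<times> real) \<Rightarrow> bool" where
  "spacelike U F = (\<forall>p\<in>U. pos_def_at (ind_metric mink F) p)"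

definition flat :: "(real \<times> real) set \<Rightarrow> (real \<times> real \<Rightarrow> real \<times> real \<times> real \<times> real) \<Rightarrow> bool" where
  "flat U F = (\<forall>p\<in>U. gauss_curv (ind_metric mink F) p = 0)"

text \<open>Mean curvature vector H = (1/2) tr_g II, where II(d_i,d_j) = normal part of F_{ij}
  = F_{ij} - Gamma^k_{ij} F_k.\<close>
definition mean_curv_vec :: "(real \<times> real \<Rightarrow> real \<times> real \<times> real \<times> real) \<Rightarrow> real \<times> real \<Rightarrow> real \<times> real \<times> real \<times> real" where
  "mean_curv_vec F p = (1/2) *\<^sub>R (\<Sum>i<2. \<Sum>j<2. inv_metric (ind_metric mink F) p i j *\<^sub>R
       (pd i (pd j F) p - (\<Sum>k<2. christoffel (ind_metric mink F) p k i j *\<^sub>R pd k F p)))"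

definition zero_mean_curv :: "(real \<times> real) set \<Rightarrow> (real \<times> real \<Rightarrow> real \<times> real \<times> real \<times> real) \<Rightarrow> bool" where
  "zero_mean_curv U F = (\<forall>p\<in>U. mean_curv_vec F p = 0)"

end

theory Submission
  imports Defs
begin

text \<open>Write \<open>f = (X, Y, Z)\<close>. Since \<open>\<iota>(x, y, z) = (z, x, y, z)\<close>, the Minkowski form
  evaluated on \<open>d(\<iota> \<circ> f)\<close> is \<open>-dZ\<^sup>2 + dX\<^sup>2 + dY\<^sup>2 + dZ\<^sup>2\<close>: both surfaces carry the same metric
  \<open>g = dX\<^sup>2 + dY\<^sup>2\<close>, which is positive definite, so \<open>\<iota> \<circ> f\<close> is spacelike. This \<open>g\<close> is the pullback of
  the Euclidean metric by \<open>\<phi> = (X, Y)\<close>, whose Jacobian cannot vanish, so \<open>\<Gamma>\<^sup>k\<^sub>i\<^sub>j\<close> is the \<open>k\<close>-th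
  coordinate of \<open>\<partial>\<^sub>i\<partial>\<^sub>j\<phi>\<close> in the frame \<open>\<partial>\<^sub>0\<phi>, \<partial>\<^sub>1\<phi>\<close>; differentiating this and using the symmetry
  of third derivatives shows that the curvature vanishes. The same formula says that the \<open>X\<close>- and
  \<open>Y\<close>-components of \<open>\<partial>\<^sub>i\<partial>\<^sub>jf - \<Gamma>\<^sup>k\<^sub>i\<^sub>j \<partial>\<^sub>kf\<close> vanish, so this normal part is \<open>h\<^sub>i\<^sub>j \<xi>\<close>;
  \<open>\<iota>\<close> maps it to \<open>h\<^sub>i\<^sub>j (1, 0, 0, 1)\<close>, whose \<open>g\<close>-trace vanishes by \<open>d\<close>-minimality.\<close>

definition slice :: "nat \<Rightarrow> real \<times> real \<Rightarrow> real \<Rightarrow> real \<times> real" where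
  "slice i p t = (if i = 0 then (t, snd p) else (fst p, t))"

definition coord :: "nat \<Rightarrow> real \<times> real \<Rightarrow> real" where
  "coord i p = (if i = 0 then fst p else snd p)"

definition has_pd :: "nat \<Rightarrow> (real \<times> real \<Rightarrow> 'a::real_normed_vector) \<Rightarrow> 'a \<Rightarrow> real \<times> real \<Rightarrow> bool" where
  "has_pd i F v p \<longleftrightarrow> ((\<lambda>t. F (slice i p t)) has_vector_derivative v) (at (coord i p))"

lemma slice_coord [simp]: "slice i p (coord i p) = p"
  by (simp add: slice_def coord_def)

lemma slice_coord_Pair [simp]:
  "slice 0 (s, t) u = (u, t)" "slice (Suc 0) (s, t) u = (s, u)"
  "coord 0 (s, t) = s" "coord (Suc 0) (s, t) = t"
  by (simp_all add: slice_def coord_def)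

lemma continuous_on_slice: "continuous_on UNIV (slice i p)"
  unfolding slice_def by (cases "i = 0") (auto intro!: continuous_intros)

lemma pd_eq_slice: "pd i F p = vector_derivative (\<lambda>t. F (slice i p t)) (at (coord i p))"
  unfolding pd_def slice_def coord_def by (cases "i = 0") auto

lemma pd_exists_eq_slice: "pd_exists i F p \<longleftrightarrow> (\<lambda>t. F (slice i p t)) differentiable (at (coord i p))"
  unfolding pd_exists_def slice_def coord_def by (cases "i = 0") auto

lemma has_pd_pd: "pd_exists i F p \<Longrightarrow> has_pd i F (pd i F p) p"
  unfolding pd_exists_eq_slice pd_eq_slice has_pd_def by (simp add: vector_derivative_works)

lemma has_pd_imp_pd_eq: "has_pd i F v p \<Longrightarrow> pd i F p = v"
  unfolding pd_eq_slice has_pd_def by (simp add: vector_derivative_at)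

lemma has_pd_imp_pd_exists: "has_pd i F v p \<Longrightarrow> pd_exists i F p"
  unfolding pd_exists_eq_slice has_pd_def by (rule differentiableI_vector)

lemma has_pd_cong_open:
  assumes "open V" "p \<in> V" "\<And>q. q \<in> V \<Longrightarrow> F q = G q" "has_pd i F v p"
  shows "has_pd i G v p"
proof -
  let ?S = "slice i p -` V"
  have "open ?S"
    using continuous_on_slice assms(1) by (simp add: continuous_on_open_vimage)
  moreover have "coord i p \<in> ?S" using assms(2) by simp
  ultimately show ?thesis
    using assms(3,4) unfolding has_pd_def
    by (auto elim!: has_vector_derivative_transform_within_open)
qed

lemma pd_cong_open:
  assumes "open V" "p \<in> V" "\<And>q. q \<in> V \<Longrightarrow> F q = G q"
  shows "pd i F p = pd i G p"
proof -
  have "has_pd i F v p \<longleftrightarrow> has_pd i G v p" for v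
    using has_pd_cong_open[of V p F G] has_pd_cong_open[of V p G F] assms by auto
  then show ?thesis unfolding pd_eq_slice vector_derivative_def has_pd_def by simp
qed

lemma pd_exists_cong_open:
  assumes "open V" "p \<in> V" "\<And>q. q \<in> V \<Longrightarrow> F q = G q" "pd_exists i F p"
  shows "pd_exists i G p"
  using has_pd_cong_open[OF assms(1-3) has_pd_pd[OF assms(4)]] by (rule has_pd_imp_pd_exists)

lemma has_pd_linear:
  assumes "bounded_linear L" "has_pd i F v p"
  shows "has_pd i (L \<circ> F) (L v) p"
  using bounded_linear.has_vector_derivative[OF assms(1)] assms(2) unfolding has_pd_def o_def
  by blast

lemma smooth_on_pd_exists:
  assumes "smooth_on U F" "p \<in> U"
  shows "pd_exists i (ipd is F) p"
proof -
  have "pd_exists (if i = 0 then 0 else 1) (ipd is F) p"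
    using assms unfolding smooth_on_def by auto
  then show ?thesis unfolding pd_exists_def by (cases "i = 0") auto
qed

lemma smooth_on_has_pd:
  "smooth_on U F \<Longrightarrow> p \<in> U \<Longrightarrow> has_pd i (ipd is F) (pd i (ipd is F) p) p"
  by (rule has_pd_pd, rule smooth_on_pd_exists)

lemma ipd_linear:
  assumes "open U" "smooth_on U F" "bounded_linear L" "q \<in> U"
  shows "ipd is (L \<circ> F) q = L (ipd is F q)"
  using assms(4)
proof (induction "is" arbitrary: q)
  case (Cons i "is")
  have "pd i (ipd is (L \<circ> F)) q = pd i (L \<circ> ipd is F) q"
    by (rule pd_cong_open[OF assms(1) Cons.prems]) (simp add: Cons.IH)
  also have "\<dots> = L (pd i (ipd is F) q)"
    using has_pd_linear[OF assms(3) smooth_on_has_pd[OF assms(2) Cons.prems]]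
    by (rule has_pd_imp_pd_eq)
  finally show ?case by (simp del: comp_apply)
qed simp

lemma smooth_on_linear:
  assumes "open U" "smooth_on U F" "bounded_linear L"
  shows "smooth_on U (L \<circ> F)"
  unfolding smooth_on_def
proof (intro allI conjI ballI impI)
  fix "is"
  have eq: "\<And>q. q \<in> U \<Longrightarrow> (L \<circ> ipd is F) q = ipd is (L \<circ> F) q"
    using ipd_linear[OF assms] by simp
  have "continuous_on U (L \<circ> ipd is F)"
    using bounded_linear.continuous_on[OF assms(3)] assms(2)
    unfolding smooth_on_def o_def by blast
  then show "continuous_on U (ipd is (L \<circ> F))"
    using continuous_on_eq eq by blast
  fix i p assume p: "p \<in> U"
  have "pd_exists i (L \<circ> ipd is F) p"
    using has_pd_linear[OF assms(3) smooth_on_has_pd[OF assms(2) p]] by (rule has_pd_imp_pd_exists)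
  then show "pd_exists i (ipd is (L \<circ> F)) p"
    by (rule pd_exists_cong_open[OF assms(1) p eq, rotated])
qed

lemma smooth_on_pd: "smooth_on U F \<Longrightarrow> smooth_on U (pd j F)"
proof -
  have "ipd is (pd j F) = ipd (is @ [j]) F" for "is"
    by (induction "is") auto
  then show "smooth_on U F \<Longrightarrow> smooth_on U (pd j F)" unfolding smooth_on_def by metis
qed

lemma has_pd_real_iff:
  "has_pd i (F :: real \<times> real \<Rightarrow> real) v p \<longleftrightarrow> ((\<lambda>t. F (slice i p t)) has_real_derivative v) (at (coord i p))"
  by (simp add: has_pd_def has_real_derivative_iff_has_vector_derivative)

lemma has_pd_add:
  "has_pd i F a p \<Longrightarrow> has_pd i G b p \<Longrightarrow> has_pd i (\<lambda>q. F q + G q :: real) (a + b) p"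
  unfolding has_pd_real_iff by (rule DERIV_add)

lemma has_pd_diff:
  "has_pd i F a p \<Longrightarrow> has_pd i G b p \<Longrightarrow> has_pd i (\<lambda>q. F q - G q :: real) (a - b) p"
  unfolding has_pd_real_iff by (rule DERIV_diff)

lemma has_pd_mult:
  "has_pd i F a p \<Longrightarrow> has_pd i G b p \<Longrightarrow> has_pd i (\<lambda>q. F q * G q :: real) (a * G p + F p * b) p"
  unfolding has_pd_real_iff using DERIV_mult by (fastforce simp: mult.commute)

lemma has_pd_divide:
  "has_pd i F a p \<Longrightarrow> has_pd i G b p \<Longrightarrow> G p \<noteq> 0 \<Longrightarrow>
    has_pd i (\<lambda>q. F q / G q :: real) ((a * G p - F p * b) / (G p * G p)) p"
  unfolding has_pd_real_iff using DERIV_divide by fastforce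

lemma smooth_on_has_real_pd:
  assumes "smooth_on U F" "(s, t) \<in> U"
  shows "((\<lambda>u. ipd is F (u, t)) has_real_derivative pd 0 (ipd is F) (s, t)) (at s)"
    and "((\<lambda>v. ipd is F (s, v)) has_real_derivative pd 1 (ipd is F) (s, t)) (at t)"
  using smooth_on_has_pd[OF assms, of 0 "is"] smooth_on_has_pd[OF assms, of 1 "is"]
  unfolding has_pd_real_iff by simp_all

lemma rectangle_difference_mvt:
  fixes F Fs Fst :: "real \<times> real \<Rightarrow> real"
  assumes h: "h > 0"
    and Fs: "\<And>s t. a \<le> s \<Longrightarrow> s \<le> a + h \<Longrightarrow> b \<le> t \<Longrightarrow> t \<le> b + h \<Longrightarrow>
              ((\<lambda>u. F (u, t)) has_real_derivative Fs (s, t)) (at s)"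
    and Fst: "\<And>s t. a \<le> s \<Longrightarrow> s \<le> a + h \<Longrightarrow> b \<le> t \<Longrightarrow> t \<le> b + h \<Longrightarrow>
              ((\<lambda>v. Fs (s, v)) has_real_derivative Fst (s, t)) (at t)"
  obtains \<xi> \<eta> where "a < \<xi>" "\<xi> < a + h" "b < \<eta>" "\<eta> < b + h"
    "F (a + h, b + h) - F (a + h, b) - F (a, b + h) + F (a, b) = h * h * Fst (\<xi>, \<eta>)"
proof -
  obtain \<xi> where \<xi>: "a < \<xi>" "\<xi> < a + h"
    "(F (a + h, b + h) - F (a + h, b)) - (F (a, b + h) - F (a, b)) =
       (a + h - a) * (Fs (\<xi>, b + h) - Fs (\<xi>, b))"
  proof -
    have "\<exists>\<xi>. a < \<xi> \<and> \<xi> < a + h \<and>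
      (F (a + h, b + h) - F (a + h, b)) - (F (a, b + h) - F (a, b)) =
       (a + h - a) * (Fs (\<xi>, b + h) - Fs (\<xi>, b))"
      by (rule MVT2[of a "a + h" "\<lambda>s. F (s, b + h) - F (s, b)"])
        (use h Fs in \<open>auto intro!: DERIV_diff\<close>)
    then show thesis using that by blast
  qed
  obtain \<eta> where \<eta>: "b < \<eta>" "\<eta> < b + h"
    "Fs (\<xi>, b + h) - Fs (\<xi>, b) = (b + h - b) * Fst (\<xi>, \<eta>)"
  proof -
    have "\<exists>\<eta>. b < \<eta> \<and> \<eta> < b + h \<and>
      Fs (\<xi>, b + h) - Fs (\<xi>, b) = (b + h - b) * Fst (\<xi>, \<eta>)"
      by (rule MVT2[of b "b + h" "\<lambda>t. Fs (\<xi>, t)"]) (use h \<xi>(1,2) Fst in auto)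
    then show thesis using that by blast
  qed
  show ?thesis
    by (rule that[OF \<xi>(1,2) \<eta>(1,2)]) (use \<xi>(3) \<eta>(3) in \<open>simp add: algebra_simps\<close>)
qed

text \<open>Schwarz's theorem: both mixed second differences of \<open>F\<close> over a small square equal the
  same rectangle difference, so the two mixed partials agree at nearby points, and continuity
  closes the gap.\<close>
lemma pd_commute:
  fixes F :: "real \<times> real \<Rightarrow> real"
  assumes U: "open U" and F: "smooth_on U F" and p: "p \<in> U"
  shows "pd 0 (pd 1 F) p = pd 1 (pd 0 F) p"
proof (rule ccontr)
  obtain a b where p_eq: "p = (a, b)" by (cases p)
  let ?A = "pd 1 (pd 0 F) p" and ?B = "pd 0 (pd 1 F) p"
  assume "?B \<noteq> ?A"
  define e where "e = \<bar>?A - ?B\<bar> / 2"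
  have e: "e > 0" using \<open>?B \<noteq> ?A\<close> by (simp add: e_def)
  have cont: "continuous_on U (ipd [i, j] F)" for i j
    using F unfolding smooth_on_def by blast
  obtain d1 where d1: "d1 > 0" "\<forall>q\<in>U. dist q p < d1 \<longrightarrow> dist (pd 1 (pd 0 F) q) ?A < e"
    using cont[of 1 0] p e unfolding continuous_on_iff by fastforce
  obtain d2 where d2: "d2 > 0" "\<forall>q\<in>U. dist q p < d2 \<longrightarrow> dist (pd 0 (pd 1 F) q) ?B < e"
    using cont[of 0 1] p e unfolding continuous_on_iff by fastforce
  obtain d0 where d0: "d0 > 0" "ball p d0 \<subseteq> U"
    using U p open_contains_ball by blast
  define h where "h = min d0 (min d1 d2) / 3"
  have h: "h > 0" using d0 d1 d2 by (simp add: h_def)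
  have near: "dist (s, t) p < min d0 (min d1 d2)"
    if "a \<le> s" "s \<le> a + h" "b \<le> t" "t \<le> b + h" for s t
  proof -
    have "dist (s, t) p \<le> \<bar>s - a\<bar> + \<bar>t - b\<bar>"
      using norm_Pair_le[of "s - a" "t - b"] by (simp add: p_eq dist_norm)
    then show ?thesis using that h by (auto simp: h_def min_def)
  qed
  have inU: "(s, t) \<in> U" if "a \<le> s" "s \<le> a + h" "b \<le> t" "t \<le> b + h" for s t
    using near[OF that] d0(2) by (auto simp: dist_commute)
  have dF: "((\<lambda>u. F (u, t)) has_real_derivative pd 0 F (s, t)) (at s)"
    "((\<lambda>v. pd 0 F (s, v)) has_real_derivative pd 1 (pd 0 F) (s, t)) (at t)"
    "((\<lambda>v. F (s, v)) has_real_derivative pd 1 F (s, t)) (at t)"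
    "((\<lambda>u. pd 1 F (u, t)) has_real_derivative pd 0 (pd 1 F) (s, t)) (at s)"
    if "a \<le> s" "s \<le> a + h" "b \<le> t" "t \<le> b + h" for s t
    using smooth_on_has_real_pd[OF F inU[OF that], of "[]"] smooth_on_has_real_pd[OF F inU[OF that], of "[0]"]
      smooth_on_has_real_pd[OF F inU[OF that], of "[1]"] by simp_all
  obtain \<xi> \<eta> where \<xi>\<eta>: "a < \<xi>" "\<xi> < a + h" "b < \<eta>" "\<eta> < b + h"
    "F (a + h, b + h) - F (a + h, b) - F (a, b + h) + F (a, b) = h * h * pd 1 (pd 0 F) (\<xi>, \<eta>)"
    using rectangle_difference_mvt[OF h dF(1,2)] by blast
  obtain \<eta>' \<xi>' where \<eta>'\<xi>': "b < \<eta>'" "\<eta>' < b + h" "a < \<xi>'" "\<xi>' < a + h"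
    "F (a + h, b + h) - F (a, b + h) - F (a + h, b) + F (a, b) = h * h * pd 0 (pd 1 F) (\<xi>', \<eta>')"
  proof -
    have "\<exists>\<eta>' \<xi>'. b < \<eta>' \<and> \<eta>' < b + h \<and> a < \<xi>' \<and> \<xi>' < a + h \<and>
      F (a + h, b + h) - F (a, b + h) - F (a + h, b) + F (a, b) = h * h * pd 0 (pd 1 F) (\<xi>', \<eta>')"
      by (rule rectangle_difference_mvt[OF h, where a = b and b = a and F = "\<lambda>(t, s). F (s, t)"
          and Fs = "\<lambda>(t, s). pd 1 F (s, t)" and Fst = "\<lambda>(t, s). pd 0 (pd 1 F) (s, t)"])
        (auto intro: dF(3,4)[unfolded One_nat_def])
    then show thesis using that by blast
  qed
  have "h * h * pd 1 (pd 0 F) (\<xi>, \<eta>) = h * h * pd 0 (pd 1 F) (\<xi>', \<eta>')"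
    using \<xi>\<eta>(5) \<eta>'\<xi>'(5) by argo
  then have same: "pd 1 (pd 0 F) (\<xi>, \<eta>) = pd 0 (pd 1 F) (\<xi>', \<eta>')"
    using h by simp
  have "dist (pd 1 (pd 0 F) (\<xi>, \<eta>)) ?A < e"
    using d1(2) inU[of \<xi> \<eta>] near[of \<xi> \<eta>] \<xi>\<eta> by auto
  moreover have "dist (pd 0 (pd 1 F) (\<xi>', \<eta>')) ?B < e"
    using d2(2) inU[of \<xi>' \<eta>'] near[of \<xi>' \<eta>'] \<eta>'\<xi>' by auto
  ultimately show False
    using same unfolding e_def dist_real_def by argo
qed

lemma pd_pd_commute:
  fixes F :: "real \<times> real \<Rightarrow> real"
  assumes "open U" "smooth_on U F" "p \<in> U" "a < 2" "b < 2"
  shows "pd a (pd b F) p = pd b (pd a F) p"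
  using pd_commute[OF assms(1-3)] assms(4,5) by (auto simp: less_2_cases_iff)

lemma inv_metric_cong:
  "(\<And>i j. g p i j = g' p i j) \<Longrightarrow> inv_metric g p = inv_metric g' p"
  unfolding inv_metric_def det_metric_def by (intro ext) simp

lemma christoffel_cong_open:
  assumes "open V" "p \<in> V" "\<And>q i j. q \<in> V \<Longrightarrow> g q i j = g' q i j"
  shows "christoffel g p = christoffel g' p"
proof (intro ext)
  fix k i j
  have "pd a (\<lambda>q. g q b c) p = pd a (\<lambda>q. g' q b c) p" for a b c
    by (rule pd_cong_open[OF assms(1,2)]) (rule assms(3))
  moreover have "inv_metric g p = inv_metric g' p"
    by (rule inv_metric_cong) (rule assms(3)[OF assms(2)])
  ultimately show "christoffel g p k i j = christoffel g' p k i j"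
    unfolding christoffel_def by (simp only:)
qed

lemma riemann_cong_open:
  assumes "open V" "p \<in> V" "\<And>q i j. q \<in> V \<Longrightarrow> g q i j = g' q i j"
  shows "riemann g p = riemann g' p"
proof (intro ext)
  fix l i j k
  have "pd a (\<lambda>q. christoffel g q b c d) p = pd a (\<lambda>q. christoffel g' q b c d) p" for a b c d
    by (rule pd_cong_open[OF assms(1,2)]) (simp only: christoffel_cong_open[OF assms(1) _ assms(3)])
  then show "riemann g p l i j k = riemann g' p l i j k"
    unfolding riemann_def by (simp only: christoffel_cong_open[OF assms])
qed

lemma gauss_curv_cong_open:
  assumes "open V" "p \<in> V" "\<And>q i j. q \<in> V \<Longrightarrow> g q i j = g' q i j"
  shows "gauss_curv g p = gauss_curv g' p"
  unfolding gauss_curv_def det_metric_def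
  by (simp only: riemann_cong_open[OF assms] assms(3)[OF assms(2)])

lemma pos_def_at_imp_det_pos:
  assumes pos: "pos_def_at g p" and sym: "g p 1 0 = g p 0 1"
  shows "det_metric g p > 0"
proof -
  have quad: "(\<Sum>i<2. \<Sum>j<2. c i * c j * g p i j) =
      c 0 * c 0 * g p 0 0 + 2 * c 0 * c 1 * g p 0 1 + c 1 * c 1 * g p 1 1" for c :: "nat \<Rightarrow> real"
    using sym by (simp add: numeral_2_eq_2)
  have g00: "g p 0 0 > 0"
    using pos[unfolded pos_def_at_def, rule_format, of "\<lambda>n. if n = 0 then 1 else 0"]
    by (simp add: quad)
  have "g p 0 0 * det_metric g p =
      (- g p 0 1) * (- g p 0 1) * g p 0 0 + 2 * (- g p 0 1) * g p 0 0 * g p 0 1 + g p 0 0 * g p 0 0 * g p 1 1"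
    unfolding det_metric_def sym by algebra
  also have "\<dots> > 0"
    using pos[unfolded pos_def_at_def, rule_format, of "\<lambda>n. if n = 0 then - g p 0 1 else g p 0 0"] g00
    unfolding quad by simp
  finally show ?thesis using g00 by (simp add: zero_less_mult_iff)
qed

definition plane_jacobian :: "(real \<times> real \<Rightarrow> real) \<Rightarrow> (real \<times> real \<Rightarrow> real) \<Rightarrow> real \<times> real \<Rightarrow> real" where
  "plane_jacobian X Y q = pd 0 X q * pd 1 Y q - pd 1 X q * pd 0 Y q"

definition plane_pullback ::
    "(real \<times> real \<Rightarrow> real) \<Rightarrow> (real \<times> real \<Rightarrow> real) \<Rightarrow> real \<times> real \<Rightarrow> nat \<Rightarrow> nat \<Rightarrow> real" where
  "plane_pullback X Y q i j = pd i X q * pd j X q + pd i Y q * pd j Y q"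

text \<open>Cramer's rule: the \<open>k\<close>-th coordinate of \<open>(u, v)\<close> in the frame
  \<open>\<partial>\<^sub>0(X, Y), \<partial>\<^sub>1(X, Y)\<close>.\<close>
definition frame_coord ::
    "(real \<times> real \<Rightarrow> real) \<Rightarrow> (real \<times> real \<Rightarrow> real) \<Rightarrow> real \<times> real \<Rightarrow> nat \<Rightarrow> real \<Rightarrow> real \<Rightarrow> real" where
  "frame_coord X Y q k u v =
     (if k = 0 then pd 1 Y q * u - pd 1 X q * v else pd 0 X q * v - pd 0 Y q * u) / plane_jacobian X Y q"

definition plane_christoffel ::
    "(real \<times> real \<Rightarrow> real) \<Rightarrow> (real \<times> real \<Rightarrow> real) \<Rightarrow> nat \<Rightarrow> nat \<Rightarrow> nat \<Rightarrow> real \<times> real \<Rightarrow> real" where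
  "plane_christoffel X Y k i j q = frame_coord X Y q k (pd i (pd j X) q) (pd i (pd j Y) q)"

lemma sum_less_2: "(\<Sum>i<2. F i) = F 0 + F (1::nat)"
  by (simp add: numeral_2_eq_2)

lemma cramer_2:
  fixes a b c d u v :: real
  assumes "a * d - b * c \<noteq> 0"
  shows "u = (d * u - b * v) / (a * d - b * c) * a + (a * v - c * u) / (a * d - b * c) * b"
    and "v = (d * u - b * v) / (a * d - b * c) * c + (a * v - c * u) / (a * d - b * c) * d"
  using assms by (simp_all add: divide_simps) (simp_all add: algebra_simps)

lemma frame_coord_decomp:
  assumes "plane_jacobian X Y q \<noteq> 0"
  shows "u = frame_coord X Y q 0 u v * pd 0 X q + frame_coord X Y q 1 u v * pd 1 X q"
    and "v = frame_coord X Y q 0 u v * pd 0 Y q + frame_coord X Y q 1 u v * pd 1 Y q"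
  using cramer_2 assms unfolding frame_coord_def plane_jacobian_def by simp_all

lemma det_plane_pullback: "det_metric (plane_pullback X Y) q = (plane_jacobian X Y q)\<^sup>2"
  unfolding det_metric_def plane_pullback_def plane_jacobian_def by algebra

context
  fixes U :: "(real \<times> real) set" and X Y :: "real \<times> real \<Rightarrow> real"
  assumes U: "open U" and X: "smooth_on U X" and Y: "smooth_on U Y"
begin

lemma pd_plane_pullback:
  assumes p: "p \<in> U"
  shows "pd k (\<lambda>q. plane_pullback X Y q i j) p =
    pd k (pd i X) p * pd j X p + pd i X p * pd k (pd j X) p +
    (pd k (pd i Y) p * pd j Y p + pd i Y p * pd k (pd j Y) p)"
  unfolding plane_pullback_def
  using smooth_on_has_pd[OF X p, of k "[i]"] smooth_on_has_pd[OF X p, of k "[j]"]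
    smooth_on_has_pd[OF Y p, of k "[i]"] smooth_on_has_pd[OF Y p, of k "[j]"]
  by (intro has_pd_imp_pd_eq has_pd_add has_pd_mult) simp_all

lemma christoffel_first_kind_plane_pullback:
  assumes p: "p \<in> U" and ijl: "i < 2" "j < 2" "l < 2"
  shows "pd i (\<lambda>q. plane_pullback X Y q j l) p + pd j (\<lambda>q. plane_pullback X Y q i l) p
           - pd l (\<lambda>q. plane_pullback X Y q i j) p
         = 2 * (pd i (pd j X) p * pd l X p + pd i (pd j Y) p * pd l Y p)"
  using pd_pd_commute[OF U X p] pd_pd_commute[OF U Y p] ijl
  by (simp add: pd_plane_pullback[OF p] algebra_simps)

lemma christoffel_plane_pullback:
  assumes p: "p \<in> U" and J: "plane_jacobian X Y p \<noteq> 0" and ijk: "i < 2" "j < 2" "k < 2"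
  shows "christoffel (plane_pullback X Y) p k i j = plane_christoffel X Y k i j p"
proof -
  have "christoffel (plane_pullback X Y) p k i j =
      (\<Sum>l<2. inv_metric (plane_pullback X Y) p k l *
         (pd i (pd j X) p * pd l X p + pd i (pd j Y) p * pd l Y p))"
    unfolding christoffel_def sum_less_2
    using christoffel_first_kind_plane_pullback[OF p ijk(1,2)] by (simp add: algebra_simps)
  also have "\<dots> = plane_christoffel X Y k i j p"
    using J ijk(3)
    unfolding sum_less_2 inv_metric_def det_plane_pullback plane_christoffel_def frame_coord_def
    by (auto simp: less_2_cases_iff plane_pullback_def plane_jacobian_def divide_simps)
      (simp_all add: algebra_simps power2_eq_square)
  finally show ?thesis .
qed

lemma has_pd_plane_jacobian:
  assumes p: "p \<in> U"
  shows "has_pd a (plane_jacobian X Y)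
    (pd a (pd 0 X) p * pd 1 Y p + pd 0 X p * pd a (pd 1 Y) p
      - (pd a (pd 1 X) p * pd 0 Y p + pd 1 X p * pd a (pd 0 Y) p)) p"
  unfolding plane_jacobian_def[abs_def]
  using smooth_on_has_pd[OF X p, of a "[0]"] smooth_on_has_pd[OF X p, of a "[1]"]
    smooth_on_has_pd[OF Y p, of a "[0]"] smooth_on_has_pd[OF Y p, of a "[1]"]
  by (intro has_pd_diff has_pd_mult) simp_all

text \<open>With \<open>J = D(X, Y)\<close>, \<open>frame_coord\<close> is \<open>J\<inverse>\<close>, and this is the product rule together with
  \<open>\<partial>\<^sub>a J\<inverse> = - J\<inverse> (\<partial>\<^sub>a J) J\<inverse>\<close>.\<close>
lemma has_pd_frame_coord:
  assumes p: "p \<in> U" and J: "plane_jacobian X Y p \<noteq> 0"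
    and V: "has_pd a V v' p" and W: "has_pd a W w' p"
  shows "has_pd a (\<lambda>q. frame_coord X Y q k (V q) (W q))
    (frame_coord X Y p k v' w'
      - (\<Sum>m<2. frame_coord X Y p k (pd a (pd m X) p) (pd a (pd m Y) p) * frame_coord X Y p m (V p) (W p))) p"
proof -
  let ?J' = "pd a (pd 0 X) p * pd 1 Y p + pd 0 X p * pd a (pd 1 Y) p
      - (pd a (pd 1 X) p * pd 0 Y p + pd 1 X p * pd a (pd 0 Y) p)"
  note dX = smooth_on_has_pd[OF X p, of a] and dY = smooth_on_has_pd[OF Y p, of a]
  show ?thesis
  proof (cases "k = 0")
    case True
    have "has_pd a (\<lambda>q. (pd 1 Y q * V q - pd 1 X q * W q) / plane_jacobian X Y q)
      (((pd a (pd 1 Y) p * V p + pd 1 Y p * v' - (pd a (pd 1 X) p * W p + pd 1 X p * w'))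
          * plane_jacobian X Y p - (pd 1 Y p * V p - pd 1 X p * W p) * ?J')
       / (plane_jacobian X Y p * plane_jacobian X Y p)) p"
      using dX[of "[1]"] dY[of "[1]"]
      by (intro has_pd_divide has_pd_diff has_pd_mult has_pd_plane_jacobian p J V W) simp_all
    then show ?thesis
      using J True unfolding frame_coord_def sum_less_2 plane_jacobian_def
      by (simp add: divide_simps) (simp add: algebra_simps)
  next
    case False
    have "has_pd a (\<lambda>q. (pd 0 X q * W q - pd 0 Y q * V q) / plane_jacobian X Y q)
      (((pd a (pd 0 X) p * W p + pd 0 X p * w' - (pd a (pd 0 Y) p * V p + pd 0 Y p * v'))
          * plane_jacobian X Y p - (pd 0 X p * W p - pd 0 Y p * V p) * ?J')
       / (plane_jacobian X Y p * plane_jacobian X Y p)) p"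
      using dX[of "[0]"] dY[of "[0]"]
      by (intro has_pd_divide has_pd_diff has_pd_mult has_pd_plane_jacobian p J V W) simp_all
    then show ?thesis
      using J False unfolding frame_coord_def sum_less_2 plane_jacobian_def
      by (simp add: divide_simps) (simp add: algebra_simps)
  qed
qed

lemma has_pd_plane_christoffel:
  assumes p: "p \<in> U" and J: "plane_jacobian X Y p \<noteq> 0"
  shows "has_pd a (plane_christoffel X Y k i j)
    (frame_coord X Y p k (pd a (pd i (pd j X)) p) (pd a (pd i (pd j Y)) p)
      - (\<Sum>m<2. plane_christoffel X Y k a m p * plane_christoffel X Y m i j p)) p"
  using has_pd_frame_coord[OF p J smooth_on_has_pd[OF X p, of a "[i, j]"]
      smooth_on_has_pd[OF Y p, of a "[i, j]"]]
  unfolding plane_christoffel_def[abs_def] by simp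

lemma riemann_plane_pullback:
  assumes J: "\<And>q. q \<in> U \<Longrightarrow> plane_jacobian X Y q \<noteq> 0" and p: "p \<in> U"
    and ijkl: "l < 2" "i < 2" "j < 2" "k < 2"
  shows "riemann (plane_pullback X Y) p l i j k = 0"
proof -
  let ?\<Gamma> = "plane_christoffel X Y"
  have \<Gamma>: "christoffel (plane_pullback X Y) q m a b = ?\<Gamma> m a b q"
    if "q \<in> U" "m < 2" "a < 2" "b < 2" for q m a b
    using christoffel_plane_pullback[OF that(1) J[OF that(1)]] that by blast
  have d\<Gamma>: "pd a (\<lambda>q. christoffel (plane_pullback X Y) q m b c) p =
      frame_coord X Y p m (pd a (pd b (pd c X)) p) (pd a (pd b (pd c Y)) p)
        - (\<Sum>n<2. ?\<Gamma> m a n p * ?\<Gamma> n b c p)"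
    if "m < 2" "b < 2" "c < 2" for a m b c
  proof -
    have "pd a (\<lambda>q. christoffel (plane_pullback X Y) q m b c) p = pd a (?\<Gamma> m b c) p"
      by (rule pd_cong_open[OF U p]) (simp add: \<Gamma> that)
    also have "\<dots> = frame_coord X Y p m (pd a (pd b (pd c X)) p) (pd a (pd b (pd c Y)) p)
        - (\<Sum>n<2. ?\<Gamma> m a n p * ?\<Gamma> n b c p)"
      by (rule has_pd_imp_pd_eq[OF has_pd_plane_christoffel[OF p J[OF p]]])
    finally show ?thesis .
  qed
  have "pd i (pd j (pd k X)) p = pd j (pd i (pd k X)) p"
    "pd i (pd j (pd k Y)) p = pd j (pd i (pd k Y)) p"
    using pd_pd_commute[OF U smooth_on_pd[OF X] p] pd_pd_commute[OF U smooth_on_pd[OF Y] p] ijkl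
    by simp_all
  then show ?thesis
    unfolding riemann_def using ijkl by (simp add: d\<Gamma> \<Gamma>[OF p] sum_less_2 algebra_simps)
qed

lemma gauss_curv_plane_pullback:
  assumes "\<And>q. q \<in> U \<Longrightarrow> plane_jacobian X Y q \<noteq> 0" and "p \<in> U"
  shows "gauss_curv (plane_pullback X Y) p = 0"
  unfolding gauss_curv_def sum_less_2 using riemann_plane_pullback[OF assms] by simp

end

lemma iota_eq: "iota u = (snd (snd u), fst u, fst (snd u), snd (snd u))"
  unfolding iota_def by (cases u) auto

lemma bounded_linear_fst_snd: "bounded_linear (fst \<circ> snd)"
  and bounded_linear_snd_snd: "bounded_linear (snd \<circ> snd)"
  by (simp_all add: bounded_linear_compose[OF bounded_linear_fst bounded_linear_snd]
      bounded_linear_compose[OF bounded_linear_snd bounded_linear_snd] o_def)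

lemma bounded_linear_iota: "bounded_linear iota"
  unfolding iota_eq[abs_def]
  using bounded_linear_fst_snd bounded_linear_snd_snd
  by (intro bounded_linear_Pair bounded_linear_fst) (simp_all add: o_def)

context
  fixes U :: "(real \<times> real) set" and f :: "real \<times> real \<Rightarrow> real \<times> real \<times> real"
  assumes U: "open U" and f: "smooth_on U f" and nondeg: "nondegenerate U f"
begin

abbreviation "X \<equiv> fst \<circ> f"
abbreviation "Y \<equiv> fst \<circ> snd \<circ> f"
abbreviation "g \<equiv> ind_metric deg_form f"

lemma smooth_on_X: "smooth_on U X" and smooth_on_Y: "smooth_on U Y"
  using smooth_on_linear[OF U f bounded_linear_fst] smooth_on_linear[OF U f bounded_linear_fst_snd]
  by (simp_all add: comp_assoc)

lemma pd_components:
  assumes "q \<in> U"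
  shows "fst (ipd is f q) = ipd is X q" "fst (snd (ipd is f q)) = ipd is Y q"
  using ipd_linear[OF U f bounded_linear_fst assms] ipd_linear[OF U f bounded_linear_fst_snd assms]
  by (simp_all add: comp_assoc)

lemma ind_metric_eq_plane_pullback:
  "q \<in> U \<Longrightarrow> g q i j = plane_pullback X Y q i j"
  unfolding ind_metric_def deg_form_def plane_pullback_def
  using pd_components[of q "[i]"] pd_components[of q "[j]"] by simp

lemma ind_metric_mink_iota:
  "q \<in> U \<Longrightarrow> ind_metric mink (iota \<circ> f) q i j = g q i j"
  unfolding ind_metric_def
  using ipd_linear[OF U f bounded_linear_iota, of q "[i]"] ipd_linear[OF U f bounded_linear_iota, of q "[j]"]
  by (simp add: iota_eq mink_def deg_form_def)

lemma plane_jacobian_nonzero: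
  assumes "q \<in> U"
  shows "plane_jacobian X Y q \<noteq> 0"
proof -
  have "det_metric g q > 0"
    using nondeg assms unfolding nondegenerate_def
    by (intro pos_def_at_imp_det_pos) (auto simp: ind_metric_def deg_form_def)
  moreover have "det_metric g q = (plane_jacobian X Y q)\<^sup>2"
    using ind_metric_eq_plane_pullback[OF assms] det_plane_pullback
    unfolding det_metric_def by metis
  ultimately show ?thesis by auto
qed

lemma christoffel_eq_plane_christoffel:
  assumes "p \<in> U" "i < 2" "j < 2" "k < 2"
  shows "christoffel g p k i j = plane_christoffel X Y k i j p"
  using christoffel_cong_open[OF U assms(1) ind_metric_eq_plane_pullback]
    christoffel_plane_pullback[OF U smooth_on_X smooth_on_Y assms(1) plane_jacobian_nonzero[OF assms(1)] assms(2-4)]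
  by simp

lemma normal_part_eq_sff:
  assumes p: "p \<in> U" and ij: "i < 2" "j < 2"
  shows "pd i (pd j f) p - (\<Sum>k<2. christoffel g p k i j *\<^sub>R pd k f p) = (0, 0, sff_d f p i j)"
proof -
  let ?v = "pd i (pd j f) p - (\<Sum>k<2. christoffel g p k i j *\<^sub>R pd k f p)"
  have "fst ?v = 0" "fst (snd ?v) = 0"
    using frame_coord_decomp[OF plane_jacobian_nonzero[OF p], where u = "pd i (pd j X) p" and v = "pd i (pd j Y) p"]
      pd_components[OF p, of "[k]" for k] pd_components[OF p, of "[i, j]"]
    by (simp_all add: sum_less_2 christoffel_eq_plane_christoffel[OF p ij] plane_christoffel_def)
  then show ?thesis
    unfolding sff_d_def by (simp add: prod_eq_iff)
qed

lemma normal_part_iota_eq: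
  assumes p: "p \<in> U" and ij: "i < 2" "j < 2"
  shows "pd i (pd j (iota \<circ> f)) p
      - (\<Sum>k<2. christoffel (ind_metric mink (iota \<circ> f)) p k i j *\<^sub>R pd k (iota \<circ> f) p)
    = (sff_d f p i j, 0, 0, sff_d f p i j)"
proof -
  have "christoffel (ind_metric mink (iota \<circ> f)) p = christoffel g p"
    by (rule christoffel_cong_open[OF U p ind_metric_mink_iota])
  moreover have "pd k (iota \<circ> f) p = iota (pd k f p)" "pd i (pd j (iota \<circ> f)) p = iota (pd i (pd j f) p)" for k
    using ipd_linear[OF U f bounded_linear_iota p, of "[k]"] ipd_linear[OF U f bounded_linear_iota p, of "[i, j]"]
    by simp_all
  moreover have "linear iota" using bounded_linear_iota by (rule bounded_linear.linear)
  ultimately have "pd i (pd j (iota \<circ> f)) p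
      - (\<Sum>k<2. christoffel (ind_metric mink (iota \<circ> f)) p k i j *\<^sub>R pd k (iota \<circ> f) p)
    = iota (pd i (pd j f) p - (\<Sum>k<2. christoffel g p k i j *\<^sub>R pd k f p))"
    by (simp add: linear_diff linear_sum linear_scale)
  then show ?thesis by (simp add: normal_part_eq_sff[OF p ij] iota_def)
qed

lemma pos_def_at_mink_iota: "p \<in> U \<Longrightarrow> pos_def_at (ind_metric mink (iota \<circ> f)) p"
  using nondeg unfolding nondegenerate_def pos_def_at_def by (simp add: ind_metric_mink_iota)

lemma gauss_curv_mink_iota:
  assumes p: "p \<in> U"
  shows "gauss_curv (ind_metric mink (iota \<circ> f)) p = 0"
proof -
  have "gauss_curv (ind_metric mink (iota \<circ> f)) p = gauss_curv (plane_pullback X Y) p"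
    by (rule gauss_curv_cong_open[OF U p]) (simp only: ind_metric_mink_iota ind_metric_eq_plane_pullback)
  also have "\<dots> = 0"
    by (rule gauss_curv_plane_pullback[OF U smooth_on_X smooth_on_Y plane_jacobian_nonzero p])
  finally show ?thesis .
qed

lemma mean_curv_vec_iota:
  assumes minimal: "d_minimal U f" and p: "p \<in> U"
  shows "mean_curv_vec (iota \<circ> f) p = 0"
proof -
  have "inv_metric (ind_metric mink (iota \<circ> f)) p = inv_metric g p"
    by (rule inv_metric_cong) (rule ind_metric_mink_iota[OF p])
  then have "mean_curv_vec (iota \<circ> f) p = (1/2) *\<^sub>R
      (\<Sum>i<2. \<Sum>j<2. inv_metric g p i j *\<^sub>R (sff_d f p i j, 0, 0, sff_d f p i j))"
    unfolding mean_curv_vec_def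
    by (intro arg_cong[where f = "\<lambda>v. (1/2) *\<^sub>R v"] sum.cong refl) (auto simp: normal_part_iota_eq[OF p])
  also have "\<dots> = ((1/2) * (\<Sum>i<2. \<Sum>j<2. inv_metric g p i j * sff_d f p i j)) *\<^sub>R (1, 0, 0, 1)"
    by (simp add: sum_less_2 algebra_simps)
  also have "\<dots> = 0"
    using minimal p unfolding d_minimal_def by (simp add: zero_prod_def)
  finally show ?thesis .
qed

end

theorem mainTheorem16:
  fixes U :: "(real \<times> real) set" and f :: "real \<times> real \<Rightarrow> real \<times> real \<times> real"
  assumes "open U"
    and "smooth_on U f"
    and "nondegenerate U f"
    and "d_minimal U f"
  shows "spacelike U (iota \<circ> f) \<and> flat U (iota \<circ> f) \<and> zero_mean_curv U (iota \<circ> f)"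
  unfolding spacelike_def flat_def zero_mean_curv_def
  by (intro conjI ballI pos_def_at_mink_iota[OF assms(1-3)] gauss_curv_mink_iota[OF assms(1-3)]
      mean_curv_vec_iota[OF assms])

end
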